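(* As formal power series in $x$, $\widehat B(x)=\sum_{n\ge0}\beta_nx^n$ has the continued fraction expansion $$\widehat B(x)=\cfrac{1}{[1]_q+\cfrac{x}{\frac{q+1}{[1]_q}-\cfrac{x}{[3]_q+\cfrac{q[2]_qx}{\frac{q^2+1}{[2]_q}-\cfrac{[2]_qx}{[5]_q+\cfrac{q^2[3]_qx}{\frac{q^3+1}{[3]_q}-\cfrac{[3]_qx}{\ddots}}}}}}}$$ where the pattern is: for each $n\ge1$ the denominator $[2n-1]_q$ is followed by $+\,q^{n-1}[n]_q x$ over $\frac{q^n+1}{[n]_q}$, which is followed by $-\,[n]_qx$ over $[2n+1]_q$, and so on.
   Context: $q$ is an indeterminate. The $q$-Bernoulli–Carlitz numbers $\beta_n\in\mathbb{Q}(q)$ are defined by: for all $n\ge0$, $q\sum_{k=0}^{n}\binom{n}{k}q^k\beta_k-\beta_n$ equals $q-1$ if $n=0$, $1$ if $n=1$, and $0$ if $n>1$. $[m]_q=(q^m-1)/(q-1)$. *)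

theory Defs
  imports "HOL-Computational_Algebra.Computational_Algebra"
begin

type_synonym Qq = "rat poly fract"

definition qvar :: Qq where
  "qvar = Fract [:0, 1:] 1"

definition qint :: "nat \<Rightarrow> Qq" where
  "qint m = (qvar ^ m - 1) / (qvar - 1)"

text \<open>Right-hand side of the defining relation of the q-Bernoulli-Carlitz numbers.\<close>
definition bc_rhs :: "nat \<Rightarrow> Qq" where
  "bc_rhs n = (if n = 0 then qvar - 1 else if n = 1 then 1 else 0)"

text \<open>Partial denominators a_i of the continued fraction
  1/(a_0 + b_1 x/(a_1 + b_2 x/(a_2 + ...))):
  a_{2m} = [2m+1]_q,  a_{2m+1} = (q^{m+1}+1)/[m+1]_q.\<close>
definition cf_a :: "nat \<Rightarrow> Qq" where
  "cf_a i = (if even i then qint (i + 1)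
             else (qvar ^ ((i + 1) div 2) + 1) / qint ((i + 1) div 2))"

definition cf_b :: "nat \<Rightarrow> Qq" where
  "cf_b i = (if odd i then qvar ^ (i div 2) * qint ((i + 1) div 2)
             else - qint (i div 2))"

fun cf_tail :: "nat \<Rightarrow> nat \<Rightarrow> Qq fps" where
  "cf_tail i 0 = fps_const (cf_a i)"
| "cf_tail i (Suc d) =
     fps_const (cf_a i) + fps_const (cf_b (Suc i)) * fps_X * inverse (cf_tail (Suc i) d)"

definition cf_convergent :: "nat \<Rightarrow> Qq fps" where
  "cf_convergent k = inverse (cf_tail 0 k)"

end

theory Submission
  imports Defs
begin

text \<open>Write \<open>\<sigma>(x) = q x / (1 - x)\<close>. Composing with \<open>\<sigma>\<close> and dividing by \<open>1 - x\<close> is the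
  binomial transform, so the recurrence for \<open>\<beta>\<close> says \<open>q B(\<sigma>(x)) = (1 - x) (B(x) + q - 1 + x)\<close>.
  Hence \<open>T\<^sub>0 = 1/B\<close> satisfies an equation \<open>R\<^sub>0(T, T \<circ> \<sigma>) = 0\<close> that is bilinear in \<open>T\<close> and
  \<open>T \<circ> \<sigma>\<close>. If \<open>T\<^sub>i\<close> satisfies \<open>R\<^sub>i\<close> and \<open>T\<^sub>i = a\<^sub>i + b\<^bsub>i+1\<^esub> x / T\<^bsub>i+1\<^esub>\<close>, clearing denominators
  shows that \<open>T\<^bsub>i+1\<^esub>\<close> satisfies \<open>R\<^bsub>i+1\<^esub>\<close>; and the coefficient of \<open>x\<close> in \<open>R\<^sub>i\<close> forces
  \<open>T\<^sub>i = a\<^sub>i + (b\<^bsub>i+1\<^esub> / a\<^bsub>i+1\<^esub>) x + O(x\<^sup>2)\<close> (this is where \<open>q\<close> being an indeterminate is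
  used), so \<open>T\<^bsub>i+1\<^esub>\<close> is again a power series, with constant term \<open>a\<^bsub>i+1\<^esub>\<close>. Truncating this
  exact continued fraction of \<open>1/B\<close> after \<open>n\<close> steps only changes coefficients beyond \<open>x\<^sup>n\<close>.\<close>

section \<open>q-integers\<close>

lemma qvar_power: "qvar ^ n = Fract (monom 1 n) 1"
proof (induction n)
  case 0
  then show ?case by (simp add: One_fract_def monom_0 one_pCons)
next
  case (Suc n)
  then show ?case by (simp add: qvar_def mult_fract mult_monom flip: monom_Suc)
qed

lemma qvar_power_neq_const: "n > 0 \<Longrightarrow> qvar ^ n \<noteq> Fract [:c:] 1"
  by (auto simp: qvar_power eq_fract dest: arg_cong[of _ _ degree] simp: degree_monom_eq)

lemma qvar_power_neq_1: "n > 0 \<Longrightarrow> qvar ^ n \<noteq> 1"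
  using qvar_power_neq_const[of n 1] by (simp add: One_fract_def one_pCons)

lemma qvar_power_neq_minus_1: "n > 0 \<Longrightarrow> qvar ^ n \<noteq> -1"
  using qvar_power_neq_const[of n "-1"] by (simp add: One_fract_def one_pCons minus_fract)

lemma qvar_power_neq_0: "qvar ^ n \<noteq> 0"
  by (simp add: qvar_power Zero_fract_def eq_fract)

lemma qvar_neq_0: "qvar \<noteq> 0"
  using qvar_power_neq_0[of 1] by simp

lemma qvar_neq_1: "qvar \<noteq> 1"
  using qvar_power_neq_1[of 1] by simp

lemma qvar_power_eq_qint: "qvar ^ m = 1 + (qvar - 1) * qint m"
  using qvar_neq_1 by (simp add: qint_def)

lemma qint_add: "qint (m + n) = qint m + qvar ^ m * qint n"
  using qvar_neq_1 by (simp add: qint_def power_add divide_simps) (simp add: algebra_simps)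

lemma qint_1: "qint (Suc 0) = 1"
  using qvar_neq_1 by (simp add: qint_def)

lemma qint_Suc: "qint (Suc m) = 1 + qvar * qint m"
  using qint_add[of 1 m] by (simp add: qint_1)

lemma qint_neq_0: "m > 0 \<Longrightarrow> qint m \<noteq> 0"
  using qvar_power_neq_1[of m] qvar_neq_1 by (simp add: qint_def)

lemma cf_a_even: "cf_a (2 * m) = qint m + qvar ^ m * qint (Suc m)"
  unfolding cf_a_def using qint_add[of m "Suc m"] by (simp add: mult_2)

lemma cf_a_odd: "cf_a (Suc (2 * m)) = (qvar ^ Suc m + 1) / qint (Suc m)"
  by (simp add: cf_a_def)

lemma cf_b_odd: "cf_b (Suc (2 * m)) = qvar ^ m * qint (Suc m)"
  by (simp add: cf_b_def)

lemma cf_b_even: "cf_b (Suc (Suc (2 * m))) = - qint (Suc m)"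
  by (simp add: cf_b_def)

lemma cf_a_neq_0: "cf_a i \<noteq> 0"
proof (cases "even i")
  case True
  then show ?thesis using qint_neq_0[of "i + 1"] by (simp add: cf_a_def)
next
  case False
  then have "i = Suc (2 * (i div 2))" by presburger
  then have "cf_a i = (qvar ^ Suc (i div 2) + 1) / qint (Suc (i div 2))"
    by (metis cf_a_odd)
  then show ?thesis using qint_neq_0[of "Suc (i div 2)"] qvar_power_neq_minus_1[of "Suc (i div 2)"]
    by (simp add: add_eq_0_iff)
qed

lemma cf_b_neq_0: "cf_b (Suc i) \<noteq> 0"
  using qint_neq_0[of "(i + 2) div 2"] qint_neq_0[of "(i + 1) div 2"] qvar_power_neq_0
  by (auto simp: cf_b_def)

section \<open>The binomial transform\<close>

definition binom_subst :: "'a::field \<Rightarrow> 'a fps" where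
  "binom_subst c = fps_const c * fps_X * inverse (1 - fps_X)"

lemma binom_subst_nth_0 [simp]: "binom_subst c $ 0 = 0"
  by (simp add: binom_subst_def)

lemma binom_subst_nth_1 [simp]: "binom_subst c $ Suc 0 = c"
  by (simp add: binom_subst_def)

lemma binom_subst_times_one_minus_X: "binom_subst c * (1 - fps_X) = fps_const c * fps_X"
proof -
  have "inverse (1 - fps_X) * (1 - fps_X) = (1 :: 'a fps)"
    by (rule inverse_mult_eq_1) simp
  then show ?thesis by (simp add: binom_subst_def mult.assoc)
qed

lemma times_inverse_one_minus_X_nth:
  "(f * inverse (1 - fps_X)) $ n = (\<Sum>j\<le>n. f $ j :: 'a::field)"
  unfolding fps_inverse_one_minus_fps_X by (simp add: fps_mult_nth atLeast0AtMost)

lemma binom_subst_power_times_inverse_nth: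
  "(binom_subst c ^ i * inverse (1 - fps_X)) $ n = c ^ i * of_nat (n choose i)"
proof (induction i arbitrary: n)
  case 0
  then show ?case unfolding fps_inverse_one_minus_fps_X by simp
next
  case (Suc i)
  have split: "binom_subst c ^ Suc i * inverse (1 - fps_X) =
      fps_const c * (fps_X * ((binom_subst c ^ i * inverse (1 - fps_X)) * inverse (1 - fps_X)))"
    by (simp add: binom_subst_def algebra_simps)
  have rec: "((binom_subst c ^ i * inverse (1 - fps_X)) * inverse (1 - fps_X)) $ k =
      c ^ i * of_nat (Suc k choose Suc i)" for k
  proof -
    have "((binom_subst c ^ i * inverse (1 - fps_X)) * inverse (1 - fps_X)) $ k =
        (\<Sum>j\<le>k. c ^ i * of_nat (j choose i))"
      by (simp only: times_inverse_one_minus_X_nth[of "_ * _"] Suc.IH)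
    then show ?thesis by (simp add: sum_choose_upper flip: sum_distrib_left of_nat_sum)
  qed
  show ?case unfolding split by (cases n) (simp_all del: binomial_Suc_Suc add: rec)
qed

lemma binom_subst_power_nth_less:
  assumes "j < i" shows "(binom_subst c ^ i) $ j = 0"
proof -
  have "binom_subst c ^ i = fps_X ^ i * (fps_const c * inverse (1 - fps_X)) ^ i"
    by (simp add: binom_subst_def power_mult_distrib mult_ac)
  then show ?thesis using assms by (simp add: fps_X_power_mult_nth)
qed

lemma binomial_transform_nth:
  "((B oo binom_subst c) * inverse (1 - fps_X)) $ n =
     (\<Sum>k = 0..n. of_nat (n choose k) * c ^ k * B $ k)"
proof -
  have "((B oo binom_subst c) * inverse (1 - fps_X)) $ n =
      (\<Sum>j\<le>n. \<Sum>k = 0..n. B $ k * (binom_subst c ^ k) $ j)"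
  proof (unfold times_inverse_one_minus_X_nth, intro sum.cong refl)
    fix j assume "j \<in> {..n}"
    then show "(B oo binom_subst c) $ j = (\<Sum>k = 0..n. B $ k * (binom_subst c ^ k) $ j)"
      unfolding fps_compose_nth
      by (intro sum.mono_neutral_left) (auto simp: binom_subst_power_nth_less)
  qed
  also have "\<dots> = (\<Sum>k = 0..n. B $ k * (binom_subst c ^ k * inverse (1 - fps_X)) $ n)"
    by (subst sum.swap) (simp add: times_inverse_one_minus_X_nth sum_distrib_left)
  finally show ?thesis
    unfolding binom_subst_power_times_inverse_nth by (simp add: mult_ac)
qed

lemma bc_beta_0:
  assumes "\<And>n. qvar * (\<Sum>k = 0..n. of_nat (n choose k) * qvar ^ k * beta k) - beta n = bc_rhs n"
  shows "beta 0 = 1"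
proof -
  have "(qvar - 1) * beta 0 = (qvar - 1) * 1"
    using assms[of 0] by (simp add: bc_rhs_def algebra_simps)
  then show ?thesis using qvar_neq_1 by simp
qed

lemma bc_functional_equation:
  assumes "\<And>n. qvar * (\<Sum>k = 0..n. of_nat (n choose k) * qvar ^ k * beta k) - beta n = bc_rhs n"
  shows "fps_const qvar * (Abs_fps beta oo binom_subst qvar) =
    (1 - fps_X) * (Abs_fps beta + fps_const qvar - 1 + fps_X)"
proof -
  let ?B = "Abs_fps beta"
  have transform: "fps_const qvar * ((?B oo binom_subst qvar) * inverse (1 - fps_X)) =
      ?B + fps_const qvar - 1 + fps_X"
  proof (rule fps_ext)
    fix n
    show "(fps_const qvar * ((?B oo binom_subst qvar) * inverse (1 - fps_X))) $ n =
        (?B + fps_const qvar - 1 + fps_X) $ n"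
      unfolding fps_mult_left_const_nth binomial_transform_nth
      using assms[of n] by (simp add: bc_rhs_def fps_X_nth algebra_simps)
  qed
  have "inverse (1 - fps_X) * (1 - fps_X) = (1 :: Qq fps)"
    by (rule inverse_mult_eq_1) simp
  then have "fps_const qvar * (?B oo binom_subst qvar) =
      fps_const qvar * ((?B oo binom_subst qvar) * inverse (1 - fps_X)) * (1 - fps_X)"
    by (simp add: mult.assoc)
  then show ?thesis unfolding transform by (simp add: mult.commute)
qed

section \<open>The functional equations of the tails\<close>

definition riccati_even :: "'a::comm_ring_1 \<Rightarrow> 'a \<Rightarrow> 'a \<Rightarrow> 'a \<Rightarrow> 'a \<Rightarrow> 'a \<Rightarrow> 'a" where
  "riccati_even q M E x T S =
     (1 - x) * (q - 1 + x) * S * T + (1 - x) * (1 - M * x) * S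
     - q * (E * E + M * (2 * E - 1) * x + M * M * (x * x)) * T + q * (M * M * M) * x * (q - 1 + x)"

definition riccati_odd :: "'a::comm_ring_1 \<Rightarrow> 'a \<Rightarrow> 'a \<Rightarrow> 'a \<Rightarrow> 'a \<Rightarrow> 'a \<Rightarrow> 'a \<Rightarrow> 'a" where
  "riccati_odd q P Q Pv x T S =
     (q - 1 + x) * S * T + (Pv * Pv + (Q - 2) * Pv * x + x * x) * S
     - Q * Pv * (Q * Pv + x) * T - Q * Pv * x * (q - 1 + x)"

lemma riccati_even_step:
  fixes q M E P Q Pv x T S U W :: "'a::idom"
  assumes "E = 1 + (q - 1) * M" "P = 1 + q * M" "P * Pv = 1" "Q = q * E"
    and "T * U = (M + E * P) * U + E * P * x"
    and "S * W * (1 - x) = (M + E * P) * W * (1 - x) + E * P * q * x"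
  shows "riccati_even q M E x T S * U * W * (1 - x) = - E * P ^ 3 * x * (1 - x) * riccati_odd q P Q Pv x U W"
proof -
  have "riccati_even q M E x T S * U * W * (1 - x) =
      (1 - x) * (q - 1 + x) * (S * W * (1 - x)) * (T * U) + (1 - x) * (1 - M * x) * (S * W * (1 - x)) * U
      - q * (E * E + M * (2 * E - 1) * x + M * M * (x * x)) * (T * U) * W * (1 - x)
      + q * (M * M * M) * x * (q - 1 + x) * U * W * (1 - x)"
    unfolding riccati_even_def by (simp add: algebra_simps)
  also have "\<dots> = - E * P ^ 3 * x * (1 - x) * riccati_odd q P Q Pv x U W"
    unfolding assms(5,6) riccati_odd_def using assms(1-4) by algebra
  finally show ?thesis .
qed

lemma riccati_odd_step:
  fixes q P Q Pv x T S U W :: "'a::idom"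
  assumes "Q = 1 + (q - 1) * P" "P * Pv = 1"
    and "T * U = (Q + 1) * Pv * U - P * x"
    and "S * W * (1 - x) = (Q + 1) * Pv * W * (1 - x) - P * q * x"
  shows "riccati_odd q P Q Pv x T S * U * W * (1 - x) = Pv * x * riccati_even q P Q x U W"
proof -
  have "riccati_odd q P Q Pv x T S * U * W * (1 - x) =
      (q - 1 + x) * (S * W * (1 - x)) * (T * U) + (Pv * Pv + (Q - 2) * Pv * x + x * x) * (S * W * (1 - x)) * U
      - Q * Pv * (Q * Pv + x) * (T * U) * W * (1 - x) - Q * Pv * x * (q - 1 + x) * U * W * (1 - x)"
    unfolding riccati_odd_def by (simp add: algebra_simps)
  also have "\<dots> = Pv * x * riccati_even q P Q x U W"
    unfolding assms(3,4) riccati_even_def using assms(1,2) by algebra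
  finally show ?thesis .
qed

text \<open>For \<open>i = 2m\<close> the parameters are \<open>M = [m]\<^sub>q\<close>, \<open>E = q\<^sup>m\<close>; for \<open>i = 2m + 1\<close> they are
  \<open>P = [m+1]\<^sub>q\<close>, \<open>Q = q\<^sup>m\<^sup>+\<^sup>1\<close> and \<open>Pv = 1/P\<close>, passed separately so that the forms stay polynomial.\<close>
definition riccati :: "nat \<Rightarrow> Qq fps \<Rightarrow> Qq fps" where
  "riccati i T =
     (if even i
      then riccati_even (fps_const qvar) (fps_const (qint (i div 2))) (fps_const (qvar ^ (i div 2)))
             fps_X T (T oo binom_subst qvar)
      else riccati_odd (fps_const qvar) (fps_const (qint (Suc (i div 2))))
             (fps_const (qvar ^ Suc (i div 2))) (fps_const (inverse (qint (Suc (i div 2)))))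
             fps_X T (T oo binom_subst qvar))"

lemma riccati_even_reciprocal:
  fixes q x B B' T S :: "'a::idom"
  assumes "T * B = 1" "S * B' = 1" "q * B' = (1 - x) * (B + q - 1 + x)"
  shows "riccati_even q 0 1 x T S = 0"
  using assms unfolding riccati_even_def by algebra

lemma riccati_0:
  assumes "\<And>n. qvar * (\<Sum>k = 0..n. of_nat (n choose k) * qvar ^ k * beta k) - beta n = bc_rhs n"
  shows "riccati 0 (inverse (Abs_fps beta)) = 0"
proof -
  let ?B = "Abs_fps beta" and ?S = "Abs_fps beta oo binom_subst qvar"
  have B0: "?B $ 0 \<noteq> 0" using bc_beta_0[OF assms] by simp
  have "inverse ?B oo binom_subst qvar = inverse ?S"
    using B0 by (simp add: fps_inverse_compose)
  moreover have "riccati_even (fps_const qvar) 0 1 fps_X (inverse ?B) (inverse ?S) = 0"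
    using B0 bc_functional_equation[OF assms]
    by (intro riccati_even_reciprocal[of _ ?B _ ?S]) (simp_all add: inverse_mult_eq_1)
  ultimately show ?thesis by (simp add: riccati_def qint_def)
qed

lemma moebius_step_times:
  fixes T U :: "'a::field fps"
  assumes "U $ 0 \<noteq> 0" and "T = fps_const a + fps_const b * fps_X * inverse U"
  shows "T * U = fps_const a * U + fps_const b * fps_X"
proof -
  have "U * inverse U = 1" using assms(1) by (rule inverse_mult_eq_1')
  then show ?thesis unfolding assms(2) by (simp add: algebra_simps)
qed

lemma moebius_step_times_subst:
  fixes T U :: "'a::field fps"
  assumes "U $ 0 \<noteq> 0" and "T = fps_const a + fps_const b * fps_X * inverse U"
  shows "(T oo binom_subst c) * (U oo binom_subst c) * (1 - fps_X) =
           fps_const a * (U oo binom_subst c) * (1 - fps_X) + fps_const b * fps_const c * fps_X"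
proof -
  let ?W = "U oo binom_subst c"
  have W_inverse: "?W * inverse ?W = 1" using assms(1) by (simp add: inverse_mult_eq_1')
  have "T oo binom_subst c = fps_const a + fps_const b * binom_subst c * inverse ?W"
    unfolding assms(2) using assms(1)
    by (simp add: fps_compose_add_distrib fps_compose_mult_distrib fps_inverse_compose)
  then have "(T oo binom_subst c) * ?W * (1 - fps_X) =
      fps_const a * ?W * (1 - fps_X) + fps_const b * (binom_subst c * (1 - fps_X)) * (?W * inverse ?W)"
    by (simp add: algebra_simps)
  then show ?thesis by (simp add: binom_subst_times_one_minus_X W_inverse mult.assoc)
qed

lemma fps_const_qvar_power: "fps_const (qvar ^ m) = 1 + (fps_const qvar - 1) * fps_const (qint m)"
  by (subst qvar_power_eq_qint) simp

lemma fps_const_qint_Suc: "fps_const (qint (Suc m)) = 1 + fps_const qvar * fps_const (qint m)"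
  by (subst qint_Suc) simp

lemma fps_const_qint_Suc_inverse: "fps_const (qint (Suc m)) * fps_const (inverse (qint (Suc m))) = 1"
  using qint_neq_0[of "Suc m"] by (simp flip: fps_const_mult)

lemma one_minus_fps_X_neq_0: "(1 - fps_X :: 'a::field fps) \<noteq> 0"
proof
  assume "1 - fps_X = (0 :: 'a fps)"
  then have "(1 - fps_X :: 'a fps) $ 0 = 0" by simp
  then show False by simp
qed

lemma riccati_step_even:
  assumes "riccati (2 * m) T = 0" and "U $ 0 \<noteq> 0"
    and "T = fps_const (cf_a (2 * m)) + fps_const (cf_b (Suc (2 * m))) * fps_X * inverse U"
  shows "riccati (Suc (2 * m)) U = 0"
proof -
  let ?q = "fps_const qvar" and ?M = "fps_const (qint m)" and ?E = "fps_const (qvar ^ m)"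
    and ?P = "fps_const (qint (Suc m))" and ?Q = "fps_const (qvar ^ Suc m)"
    and ?Pv = "fps_const (inverse (qint (Suc m)))" and ?W = "U oo binom_subst qvar"
  have "fps_const (cf_a (2 * m)) = ?M + ?E * ?P" "fps_const (cf_b (Suc (2 * m))) = ?E * ?P"
    by (simp_all add: cf_a_even cf_b_odd)
  note moebius = moebius_step_times[OF assms(2,3), unfolded this]
    moebius_step_times_subst[OF assms(2,3), where c = qvar, unfolded this]
  have "riccati_even ?q ?M ?E fps_X T (T oo binom_subst qvar) * U * ?W * (1 - fps_X) =
      - ?E * ?P ^ 3 * fps_X * (1 - fps_X) * riccati_odd ?q ?P ?Q ?Pv fps_X U ?W"
    by (rule riccati_even_step[OF fps_const_qvar_power fps_const_qint_Suc fps_const_qint_Suc_inverse])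
      (use moebius in \<open>simp_all add: algebra_simps\<close>)
  moreover have "riccati_even ?q ?M ?E fps_X T (T oo binom_subst qvar) = 0"
    using assms(1) by (simp add: riccati_def)
  moreover have "- ?E * ?P ^ 3 * fps_X * (1 - fps_X) \<noteq> 0"
    using qvar_power_neq_0 qint_neq_0[of "Suc m"] one_minus_fps_X_neq_0 by (simp del: fps_const_power)
  ultimately show ?thesis using qvar_neq_0 by (simp add: riccati_def)
qed

lemma riccati_step_odd:
  assumes "riccati (Suc (2 * m)) T = 0" and "U $ 0 \<noteq> 0"
    and "T = fps_const (cf_a (Suc (2 * m))) + fps_const (cf_b (Suc (Suc (2 * m)))) * fps_X * inverse U"
  shows "riccati (Suc (Suc (2 * m))) U = 0"
proof -
  let ?q = "fps_const qvar" and ?P = "fps_const (qint (Suc m))" and ?Q = "fps_const (qvar ^ Suc m)"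
    and ?Pv = "fps_const (inverse (qint (Suc m)))" and ?W = "U oo binom_subst qvar"
  have "fps_const (cf_a (Suc (2 * m))) = (?Q + 1) * ?Pv" "fps_const (cf_b (Suc (Suc (2 * m)))) = - ?P"
    by (simp_all add: cf_a_odd cf_b_even divide_inverse)
  note moebius = moebius_step_times[OF assms(2,3), unfolded this]
    moebius_step_times_subst[OF assms(2,3), where c = qvar, unfolded this]
  have "riccati_odd ?q ?P ?Q ?Pv fps_X T (T oo binom_subst qvar) * U * ?W * (1 - fps_X) =
      ?Pv * fps_X * riccati_even ?q ?P ?Q fps_X U ?W"
    by (rule riccati_odd_step[OF fps_const_qvar_power fps_const_qint_Suc_inverse])
      (use moebius in \<open>simp_all add: algebra_simps\<close>)
  moreover have "riccati_odd ?q ?P ?Q ?Pv fps_X T (T oo binom_subst qvar) = 0"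
    using assms(1) by (simp add: riccati_def)
  moreover have "?Pv * fps_X \<noteq> 0"
    using qint_neq_0[of "Suc m"] by simp
  ultimately show ?thesis by (simp add: riccati_def)
qed

lemma riccati_step:
  assumes "riccati i T = 0" and "U $ 0 \<noteq> 0"
    and "T = fps_const (cf_a i) + fps_const (cf_b (Suc i)) * fps_X * inverse U"
  shows "riccati (Suc i) U = 0"
proof (cases "even i")
  case True
  then obtain m where "i = 2 * m" by (rule evenE)
  with assms show ?thesis by (simp add: riccati_step_even)
next
  case False
  then obtain m where "i = Suc (2 * m)" by (metis oddE Suc_eq_plus1)
  with assms show ?thesis by (simp add: riccati_step_odd)
qed

lemma riccati_even_nth_1:
  "riccati_even (fps_const q) (fps_const M) (fps_const E) fps_X T (T oo binom_subst q) $ 1 =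
     (q\<^sup>2 - 1) * T $ 0 * T $ 1 + q * (1 - E\<^sup>2) * T $ 1 + (2 - q) * (T $ 0)\<^sup>2
     - (1 + M + q * M * (2 * E - 1)) * T $ 0 + q * (q - 1) * M ^ 3"
  by (simp add: riccati_even_def fps_mult_nth_1 fps_compose_nth power2_eq_square power3_eq_cube
      numeral_2_eq_2 algebra_simps)

lemma riccati_odd_nth_1:
  "riccati_odd (fps_const q) (fps_const P) (fps_const Q) (fps_const Pv) fps_X T (T oo binom_subst q) $ 1 =
     (q\<^sup>2 - 1) * T $ 0 * T $ 1 + Pv\<^sup>2 * (q - Q\<^sup>2) * T $ 1 + (T $ 0)\<^sup>2 - 2 * Pv * T $ 0 - (q - 1) * Pv * Q"
  by (simp add: riccati_odd_def fps_mult_nth_1 fps_compose_nth power2_eq_square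
      numeral_2_eq_2 algebra_simps)

lemma riccati_nth_1_even:
  assumes "riccati (2 * m) T = 0" and "T $ 0 = cf_a (2 * m)"
  shows "T $ 1 = cf_b (Suc (2 * m)) / cf_a (Suc (2 * m))"
proof -
  define E M P where "E = qvar ^ m" and "M = qint m" and "P = qint (Suc m)"
  have "riccati_even (fps_const qvar) (fps_const M) (fps_const E) fps_X T (T oo binom_subst qvar) $ 1 = 0"
    using assms(1) by (simp add: riccati_def E_def M_def)
  then have coeff: "(qvar\<^sup>2 - 1) * T $ 0 * T $ 1 + qvar * (1 - E\<^sup>2) * T $ 1 + (2 - qvar) * (T $ 0)\<^sup>2
      - (1 + M + qvar * M * (2 * E - 1)) * T $ 0 + qvar * (qvar - 1) * M ^ 3 = 0"
    by (simp only: riccati_even_nth_1)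
  have "E = 1 + (qvar - 1) * M" "P = 1 + qvar * M" "T $ 0 = M + E * P"
    using qvar_power_eq_qint qint_Suc assms(2) cf_a_even by (simp_all add: E_def M_def P_def)
  with coeff have "((qvar * E)\<^sup>2 - 1) * (T $ 1 * (qvar * E + 1) - E * P\<^sup>2) = 0"
    by algebra
  moreover have "(qvar * E)\<^sup>2 \<noteq> 1"
  proof -
    have "(qvar * E)\<^sup>2 = qvar ^ (Suc m * 2)"
      unfolding E_def by (metis power_Suc power_mult)
    then show ?thesis using qvar_power_neq_1[of "Suc m * 2"] by simp
  qed
  moreover have "qvar * E + 1 \<noteq> 0" and "P \<noteq> 0"
    using qvar_power_neq_minus_1[of "Suc m"] qint_neq_0[of "Suc m"]
    by (auto simp: E_def P_def add_eq_0_iff)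
  ultimately show ?thesis
    by (simp add: cf_a_odd cf_b_odd flip: E_def P_def) (simp add: field_simps power2_eq_square)
qed

lemma riccati_nth_1_odd:
  assumes "riccati (Suc (2 * m)) T = 0" and "T $ 0 = cf_a (Suc (2 * m))"
  shows "T $ 1 = cf_b (Suc (Suc (2 * m))) / cf_a (Suc (Suc (2 * m)))"
proof -
  define E P Pv where "E = qvar ^ m" and "P = qint (Suc m)" and "Pv = inverse (qint (Suc m))"
  have "riccati_odd (fps_const qvar) (fps_const P) (fps_const (qvar * E)) (fps_const Pv) fps_X T
      (T oo binom_subst qvar) $ 1 = 0"
    using assms(1) by (simp add: riccati_def E_def P_def Pv_def)
  then have coeff: "(qvar\<^sup>2 - 1) * T $ 0 * T $ 1 + Pv\<^sup>2 * (qvar - (qvar * E)\<^sup>2) * T $ 1 + (T $ 0)\<^sup>2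
      - 2 * Pv * T $ 0 - (qvar - 1) * Pv * (qvar * E) = 0"
    by (simp only: riccati_odd_nth_1)
  have "P \<noteq> 0" using qint_neq_0[of "Suc m"] by (simp add: P_def)
  then have "P * Pv = 1" by (simp add: Pv_def P_def)
  moreover have "qvar * E = 1 + (qvar - 1) * P" "T $ 0 = (qvar * E + 1) * Pv"
    using qvar_power_eq_qint[of "Suc m"] assms(2) cf_a_odd by (simp_all add: E_def P_def Pv_def divide_inverse)
  ultimately have product: "Pv\<^sup>2 * (qvar * (qvar * E)\<^sup>2 - 1) * (T $ 1 * (P + qvar * E * (1 + qvar * P)) + P) = 0"
    using coeff by algebra
  have "Pv \<noteq> 0" using \<open>P * Pv = 1\<close> by auto
  moreover have "qvar * (qvar * E)\<^sup>2 \<noteq> 1"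
  proof -
    have "qvar * (qvar * E)\<^sup>2 = qvar ^ Suc (Suc m * 2)"
      unfolding E_def by (metis power_Suc power_mult)
    then show ?thesis using qvar_power_neq_1[of "Suc (Suc m * 2)"] by (simp only:) simp
  qed
  ultimately have "T $ 1 * (P + qvar * E * (1 + qvar * P)) + P = 0"
    using product by simp
  moreover have "P + qvar * E * (1 + qvar * P) = cf_a (Suc (Suc (2 * m)))"
    using cf_a_even[of "Suc m"] by (simp add: E_def P_def qint_Suc[of "Suc m"])
  ultimately have "T $ 1 * cf_a (Suc (Suc (2 * m))) = - P"
    by (simp add: eq_neg_iff_add_eq_0)
  then show ?thesis
    using cf_a_neq_0[of "Suc (Suc (2 * m))"] cf_b_even[of m] by (simp add: P_def field_simps)
qed

lemma riccati_nth_1: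
  assumes "riccati i T = 0" and "T $ 0 = cf_a i"
  shows "T $ 1 = cf_b (Suc i) / cf_a (Suc i)"
proof (cases "even i")
  case True
  then obtain m where "i = 2 * m" by (rule evenE)
  with assms show ?thesis using riccati_nth_1_even[of m T] by simp
next
  case False
  then obtain m where "i = Suc (2 * m)" by (metis oddE Suc_eq_plus1)
  with assms show ?thesis using riccati_nth_1_odd[of m T] by simp
qed

lemma fps_continued_fraction_step:
  fixes T :: "'a::field fps"
  assumes "T $ 0 = a" and "T $ 1 = b / a'" and "b \<noteq> 0" and "a' \<noteq> 0"
  defines "U \<equiv> fps_const b * inverse (fps_shift 1 (T - fps_const a))"
  shows "U $ 0 = a'" and "T = fps_const a + fps_const b * fps_X * inverse U"
proof -
  let ?R = "fps_shift 1 (T - fps_const a)"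
  have R0: "?R $ 0 = b / a'" using assms(2) by simp
  then show "U $ 0 = a'" using assms(3,4) by (simp add: U_def)
  have "inverse U = fps_const (inverse b) * ?R"
    using R0 assms(3,4) by (simp add: U_def fps_inverse_mult fps_const_inverse)
  then have "fps_const b * fps_X * inverse U = fps_const (b * inverse b) * (fps_X * ?R)"
    by (simp add: algebra_simps)
  also have "fps_X * ?R = T - fps_const a"
    using assms(1) by (intro fps_ext) (simp split: nat.split)
  finally show "T = fps_const a + fps_const b * fps_X * inverse U"
    using assms(3) by simp
qed

section \<open>Convergence of the continued fraction\<close>

fun exact_tail :: "Qq fps \<Rightarrow> nat \<Rightarrow> Qq fps" where
  "exact_tail T 0 = T"
| "exact_tail T (Suc i) =
     fps_const (cf_b (Suc i)) * inverse (fps_shift 1 (exact_tail T i - fps_const (cf_a i)))"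

lemma exact_tail_riccati:
  assumes "riccati 0 T = 0" and "T $ 0 = cf_a 0"
  shows "riccati i (exact_tail T i) = 0 \<and> exact_tail T i $ 0 = cf_a i"
proof (induction i)
  case 0
  then show ?case using assms by simp
next
  case (Suc i)
  then have R: "riccati i (exact_tail T i) = 0" and tail_0: "exact_tail T i $ 0 = cf_a i" by auto
  note step = fps_continued_fraction_step[OF tail_0 riccati_nth_1[OF R tail_0] cf_b_neq_0 cf_a_neq_0,
      folded exact_tail.simps(2)]
  have "riccati (Suc i) (exact_tail T (Suc i)) = 0"
    using riccati_step[OF R _ step(2)] step(1) cf_a_neq_0 by metis
  with step(1) show ?case by blast
qed

lemma exact_tail_unfold:
  assumes "riccati 0 T = 0" and "T $ 0 = cf_a 0"
  shows "exact_tail T i =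
    fps_const (cf_a i) + fps_const (cf_b (Suc i)) * fps_X * inverse (exact_tail T (Suc i))"
proof -
  have "riccati i (exact_tail T i) = 0" and tail_0: "exact_tail T i $ 0 = cf_a i"
    using exact_tail_riccati[OF assms] by auto
  then show ?thesis unfolding exact_tail.simps(2)
    by (rule fps_continued_fraction_step(2)[OF tail_0 riccati_nth_1 cf_b_neq_0 cf_a_neq_0])
qed

lemma fps_cutoff_inverse_cong:
  fixes f g :: "'a::field fps"
  assumes "fps_cutoff n f = fps_cutoff n g" and "f $ 0 \<noteq> 0"
  shows "fps_cutoff n (inverse f) = fps_cutoff n (inverse g)"
proof (cases "n = 0")
  case False
  then have "g $ 0 \<noteq> 0" using assms by (metis fps_cutoff_nth neq0_conv)
  then show ?thesis using assms by (metis fps_cutoff_inverse)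
qed simp

lemma fps_cutoff_Suc_linear_cong:
  fixes f g :: "'a::comm_ring_1 fps"
  assumes "fps_cutoff n f = fps_cutoff n g"
  shows "fps_cutoff (Suc n) (fps_const a + fps_const b * fps_X * f) =
    fps_cutoff (Suc n) (fps_const a + fps_const b * fps_X * g)"
  using assms unfolding fps_cutoff_eq_fps_cutoff_iff
  by (auto simp: less_Suc_eq_0_disj mult.assoc)

lemma cf_tail_nth_0 [simp]: "cf_tail i d $ 0 = cf_a i"
  by (induction d arbitrary: i) simp_all

lemma cf_tail_cutoff:
  assumes "\<And>i. T i = fps_const (cf_a i) + fps_const (cf_b (Suc i)) * fps_X * inverse (T (Suc i))"
  shows "fps_cutoff (Suc d) (cf_tail i d) = fps_cutoff (Suc d) (T i)"
proof (induction d arbitrary: i)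
  case 0
  then show ?case using assms[of i] by (simp add: fps_cutoff_eq_fps_cutoff_iff)
next
  case (Suc d)
  have "cf_tail (Suc i) d $ 0 \<noteq> 0" by (simp add: cf_a_neq_0)
  with Suc.IH have "fps_cutoff (Suc d) (inverse (cf_tail (Suc i) d)) = fps_cutoff (Suc d) (inverse (T (Suc i)))"
    by (rule fps_cutoff_inverse_cong)
  then show ?case
    unfolding cf_tail.simps(2) by (subst assms[of i]) (rule fps_cutoff_Suc_linear_cong)
qed

lemma cf_convergent_cutoff:
  assumes "\<And>n. qvar * (\<Sum>k = 0..n. of_nat (n choose k) * qvar ^ k * beta k) - beta n = bc_rhs n"
  shows "fps_cutoff (Suc n) (cf_convergent n) = fps_cutoff (Suc n) (Abs_fps beta)"
proof -
  let ?B = "Abs_fps beta"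
  have B_0: "?B $ 0 = 1" using bc_beta_0[OF assms] by simp
  have "riccati 0 (inverse ?B) = 0" and "inverse ?B $ 0 = cf_a 0"
    using riccati_0[OF assms] B_0 by (simp_all add: cf_a_def qint_1)
  from cf_tail_cutoff[OF exact_tail_unfold[OF this], of n 0]
  have "fps_cutoff (Suc n) (cf_tail 0 n) = fps_cutoff (Suc n) (inverse ?B)" by simp
  then have "fps_cutoff (Suc n) (inverse (cf_tail 0 n)) = fps_cutoff (Suc n) (inverse (inverse ?B))"
    by (rule fps_cutoff_inverse_cong) (simp add: cf_a_neq_0)
  then show ?thesis using B_0 by (simp add: cf_convergent_def)
qed

theorem mainTheorem8:
  fixes beta :: "nat \<Rightarrow> Qq"
  assumes "\<And>n. qvar * (\<Sum>k = 0..n. of_nat (n choose k) * qvar ^ k * beta k) - beta n = bc_rhs n"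
  shows "cf_convergent \<longlonglongrightarrow> Abs_fps beta"
proof (rule tendsto_fpsI)
  show "\<forall>\<^sub>F n in sequentially. cf_convergent n $ k = Abs_fps beta $ k" for k
  proof (rule eventually_mono[OF eventually_ge_at_top[of k]])
    fix n assume "k \<le> n"
    then show "cf_convergent n $ k = Abs_fps beta $ k"
      using arg_cong[OF cf_convergent_cutoff[OF assms, of n], of "\<lambda>f. f $ k"] by simp
  qed
qed

end
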